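(* Let $f,g:\mathbb{R}^n\to\mathbb{R}$ satisfy assumptions (A1)–(A4) below, let $\zeta\in[0,1)$ and let $x_0\in\Omega=\{x: g(x)\le 0\}$. Then the trajectory $x(t;\zeta,x_0)$ stays, for all $t$ in its maximal existence interval, within the set $B_{f(x_0)}=\{x: f(x)\le f(x_0)\}$.
   Context: Assumptions: (A1) $\lim_{|x|\to\infty} f(x)=+\infty$; (A2) $\nabla f(x)\neq 0$ for all $x\in\Omega=\{x:g(x)\le 0\}$; (A3) $\nabla g(x)\neq 0$ for all $x\in\Omega$; (A4) $f$ and $g$ are twice continuously differentiable. For $\zeta\in[0,1)$ define the vector field $\mathbf{s}_\zeta(x)=-\frac{\nabla f(x)}{|\nabla f(x)|}-\zeta\frac{\nabla g(x)}{|\nabla g(x)|}$ ($|\cdot|$ the Euclidean norm), defined on $E=\{x\in\mathbb{R}^n: \nabla f(x)\neq 0,\ \nabla g(x)\neq 0\}$. The trajectory $x(t;\zeta,x_0)$ is the solution of $\frac{dx}{dt}=\mathbf{s}_\zeta(x)$, $x(0)=x_0$, on its maximal interval of existence $[0,T_{\zeta,x_0})$ in $E$. *)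

theory Defs
  imports "HOL-Analysis.Analysis"
begin

definition C2_with_gradient :: "(real^'n \<Rightarrow> real) \<Rightarrow> (real^'n \<Rightarrow> real^'n) \<Rightarrow> bool" where
  "C2_with_gradient f Df \<longleftrightarrow>
     (\<forall>x. (f has_derivative (\<lambda>h. Df x \<bullet> h)) (at x)) \<and>
     (\<exists>D2f :: real^'n \<Rightarrow> ((real^'n) \<Rightarrow>\<^sub>L (real^'n)).
        (\<forall>x. (Df has_derivative blinfun_apply (D2f x)) (at x)) \<and> continuous_on UNIV D2f)"

definition s_field :: "(real^'n \<Rightarrow> real^'n) \<Rightarrow> (real^'n \<Rightarrow> real^'n) \<Rightarrow> real \<Rightarrow> real^'n \<Rightarrow> real^'n" where
  "s_field Df Dg \<zeta> x = - ((1 / norm (Df x)) *\<^sub>R Df x) - \<zeta> *\<^sub>R ((1 / norm (Dg x)) *\<^sub>R Dg x)"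

definition E_set :: "(real^'n \<Rightarrow> real^'n) \<Rightarrow> (real^'n \<Rightarrow> real^'n) \<Rightarrow> (real^'n) set" where
  "E_set Df Dg = {x. Df x \<noteq> 0 \<and> Dg x \<noteq> 0}"

definition is_solution :: "(real^'n \<Rightarrow> real^'n) \<Rightarrow> (real^'n) set \<Rightarrow> real^'n \<Rightarrow> (real \<Rightarrow> real^'n) \<Rightarrow> ereal \<Rightarrow> bool" where
  "is_solution V E x0 x T \<longleftrightarrow> T > 0 \<and> x 0 = x0 \<and>
     (\<forall>t. 0 \<le> t \<and> ereal t < T \<longrightarrow>
        x t \<in> E \<and> (x has_vector_derivative V (x t)) (at t within {s. 0 \<le> s \<and> ereal s < T}))"

definition maximal_solution :: "(real^'n \<Rightarrow> real^'n) \<Rightarrow> (real^'n) set \<Rightarrow> real^'n \<Rightarrow> (real \<Rightarrow> real^'n) \<Rightarrow> ereal \<Rightarrow> bool" where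
  "maximal_solution V E x0 x T \<longleftrightarrow> is_solution V E x0 x T \<and>
     (\<forall>y T'. is_solution V E x0 y T' \<longrightarrow> T' \<le> T)"

end

theory Submission
  imports Defs
begin

text \<open>Along the flow, the chain rule and Cauchy--Schwarz give
  \<open>d/dt f(x(t)) = \<nabla>f \<bullet> s\<^sub>\<zeta> = -|\<nabla>f| - \<zeta> \<nabla>f \<bullet> \<nabla>g / |\<nabla>g| \<le> -(1 - \<zeta>) |\<nabla>f| \<le> 0\<close>,
  so \<open>f\<close> does not increase along the trajectory, and the mean value theorem turns this into
  \<open>f(x(t)) \<le> f(x\<^sub>0)\<close>. Only the first-order part of (A4) and \<open>\<zeta> \<le> 1\<close> are needed.\<close>

lemma inner_gradient_s_field_le:
  fixes Df Dg :: "real^'n \<Rightarrow> real^'n"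
  assumes "0 \<le> \<zeta>"
  shows "Df y \<bullet> s_field Df Dg \<zeta> y \<le> - (1 - \<zeta>) * norm (Df y)"
proof -
  define a b where "a = Df y" and "b = Dg y"
  have "- norm a \<le> (1 / norm b) * (a \<bullet> b)"
  proof (cases "b = 0")
    case False
    have "- (norm a * norm b) \<le> a \<bullet> b"
      using Cauchy_Schwarz_ineq2[of a b] by linarith
    with False show ?thesis by (simp add: field_simps)
  qed simp
  then have "- (\<zeta> * ((1 / norm b) * (a \<bullet> b))) \<le> \<zeta> * norm a"
    using mult_left_mono[OF _ assms] by fastforce
  moreover have "(1 / norm a) * (a \<bullet> a) = norm a"
    by (simp add: power2_norm_eq_inner[symmetric] power2_eq_square)
  ultimately show ?thesis
    unfolding s_field_def a_def[symmetric] b_def[symmetric]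
    by (simp add: inner_diff_right algebra_simps)
qed

lemma nonincreasing_along_descent_path:
  fixes f :: "'a::real_inner \<Rightarrow> real" and x :: "real \<Rightarrow> 'a"
  assumes "0 \<le> t"
    and f: "\<And>y. (f has_derivative (\<lambda>h. Df y \<bullet> h)) (at y)"
    and x: "\<And>s. s \<in> {0..t} \<Longrightarrow> (x has_vector_derivative V (x s)) (at s within {0..t})"
    and descent: "\<And>s. s \<in> {0..t} \<Longrightarrow> Df (x s) \<bullet> V (x s) \<le> 0"
  shows "f (x t) \<le> f (x 0)"
proof -
  have "((\<lambda>s. f (x s)) has_derivative (\<lambda>h. Df (x s) \<bullet> (h *\<^sub>R V (x s)))) (at s within {0..t})"
    if "0 \<le> s" "s \<le> t" for s
    using has_derivative_compose[OF x[unfolded has_vector_derivative_def] f] that by simp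
  from mvt_very_simple[OF \<open>0 \<le> t\<close> this] obtain s where
    "s \<in> {0..t}" and "f (x t) - f (x 0) = Df (x s) \<bullet> ((t - 0) *\<^sub>R V (x s))"
    by blast
  with mult_nonneg_nonpos[OF \<open>0 \<le> t\<close> descent[of s]] show ?thesis
    by simp
qed

lemma is_solution_has_vector_derivative_on_interval:
  assumes "is_solution V E x0 x T" and "ereal t < T" and "s \<in> {0..t}"
  shows "(x has_vector_derivative V (x s)) (at s within {0..t})"
proof -
  have sub: "{0..t} \<subseteq> {s. 0 \<le> s \<and> ereal s < T}"
    using assms(2) by auto (meson ereal_less_eq(3) order.strict_trans1)
  with assms(1,3) have "(x has_vector_derivative V (x s)) (at s within {s. 0 \<le> s \<and> ereal s < T})"
    by (auto simp: is_solution_def)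
  then show ?thesis
    using sub by (rule has_vector_derivative_within_subset)
qed

theorem lemma5p2:
  fixes f g :: "real^'n \<Rightarrow> real" and Df Dg :: "real^'n \<Rightarrow> real^'n"
    and \<zeta> :: real and x0 :: "real^'n" and x :: "real \<Rightarrow> real^'n" and T :: ereal
  assumes A1: "filterlim f at_top at_infinity"
    and A2: "\<forall>y. g y \<le> 0 \<longrightarrow> Df y \<noteq> 0"
    and A3: "\<forall>y. g y \<le> 0 \<longrightarrow> Dg y \<noteq> 0"
    and A4f: "C2_with_gradient f Df"
    and A4g: "C2_with_gradient g Dg"
    and zeta: "0 \<le> \<zeta>" "\<zeta> < 1"
    and x0: "g x0 \<le> 0"
    and traj: "maximal_solution (s_field Df Dg \<zeta>) (E_set Df Dg) x0 x T"
  shows "\<forall>t. 0 \<le> t \<and> ereal t < T \<longrightarrow> f (x t) \<le> f x0"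
proof (intro allI impI)
  fix t assume "0 \<le> t \<and> ereal t < T"
  then have t: "0 \<le> t" "ereal t < T" by auto
  have sol: "is_solution (s_field Df Dg \<zeta>) (E_set Df Dg) x0 x T"
    using traj by (simp add: maximal_solution_def)
  have grad_f: "\<And>y. (f has_derivative (\<lambda>h. Df y \<bullet> h)) (at y)"
    using A4f by (simp add: C2_with_gradient_def)
  have descent: "Df y \<bullet> s_field Df Dg \<zeta> y \<le> 0" for y
  proof -
    have "- (1 - \<zeta>) * norm (Df y) \<le> 0"
      using zeta(2) by (simp add: mult_nonpos_nonneg)
    with inner_gradient_s_field_le[OF zeta(1)] show ?thesis
      by (rule order.trans)
  qed
  have "f (x t) \<le> f (x 0)"
    using nonincreasing_along_descent_path[OF t(1) grad_f
        is_solution_has_vector_derivative_on_interval[OF sol t(2)] descent] .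
  with sol show "f (x t) \<le> f x0"
    by (simp add: is_solution_def)
qed

end
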